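(* For $n\ge1$, $a(n)=|D_X(A_n)|$ is odd if and only if $n=1$ or $n=2^t$ for some integer $t>1$.
   Context: For $n\ge1$ let $A_n$ be the set of even numbers $j$ with $2\le j\le n-1$. For $A\subseteq[n]$, $D_X(A)$ is the set of all linear orders $q$ on $[n]$ such that for every triple $i<j<k$: if $j\in A$ then $i$ is not ranked last among $\{i,j,k\}$ in $q$, and if $j\notin A$ then $k$ is not ranked first among $\{i,j,k\}$ in $q$. *)

theory Defs
  imports Main
begin

text \<open>A linear order on [n] = {1..n} is a relation q with linear_order_on {1..n} q
  (reflexive; (x,y) in q means x is ranked before or equal to y).
  "x ranked first among {i,j,k}" = x precedes the other two;
  "x ranked last" = the other two precede x.\<close>

definition A_n :: "nat \<Rightarrow> nat set" where
  "A_n n = {j. even j \<and> 2 \<le> j \<and> j \<le> n - 1}"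

definition D_X :: "nat \<Rightarrow> nat set \<Rightarrow> (nat \<times> nat) set set" where
  "D_X n A = {q. linear_order_on {1..n} q \<and>
     (\<forall>i j k. 1 \<le> i \<and> i < j \<and> j < k \<and> k \<le> n \<longrightarrow>
        (j \<in> A \<longrightarrow> \<not> ((j, i) \<in> q \<and> (k, i) \<in> q)) \<and>
        (j \<notin> A \<longrightarrow> \<not> ((k, i) \<in> q \<and> (k, j) \<in> q)))}"

end

theory Submission
  imports
    Defs
    "HOL-Computational_Algebra.Formal_Power_Series"
    "HOL-Number_Theory.Cong"
    "HOL-Combinatorics.Permutations"
begin

text \<open>
  Encode a linear order on [n] by the permutation r of {1..n} sending each element to its
  position. Every order in D_X(A_(m+1)) arises in exactly one way by inserting m+1 into an
  order r in D_X(A_m); the admissible insertion slots form a final segment, and its length s,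
  the label of r, determines the labels of the children: for even m+1 they are 1 (s-1 times)
  and s+1, for odd m+1 they are 2, 2, 3, ..., s. Summing over this generating tree shows that
  a(2m+3) is even and that a(2m+2) = b_m, where b_m iterates the operator describing two
  consecutive levels of the tree. Expressing these iterates through the Catalan generating
  function C = 1 + x C^2 gives a recurrence for b_m which modulo 2 is the Catalan recurrence,
  so b_m and the Catalan number C_m have the same parity for m \<ge> 1, while b_0 = 2.
  Finally, pairing the terms of C_(k+1) = sum C_i C_(k-i) shows that C_(k+1) is odd iff k is
  even and C_(k/2) is odd, hence C_m is odd iff m+1 is a power of two.
\<close>

section \<open>Linear orders as rank permutations\<close>

definition rank_order :: "'a set \<Rightarrow> ('a \<Rightarrow> nat) \<Rightarrow> ('a \<times> 'a) set" where
  "rank_order S r = {(x, y). x \<in> S \<and> y \<in> S \<and> r x \<le> r y}"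

lemma linear_order_on_rank_order: "inj_on r S \<Longrightarrow> linear_order_on S (rank_order S r)"
  unfolding linear_order_on_def partial_order_on_def preorder_on_def refl_on_def trans_on_def
    antisym_on_def total_on_def rank_order_def
  by (auto dest: inj_onD)

lemma permutes_interval_bounds: "r permutes {1..n} \<Longrightarrow> x \<in> {1..n} \<Longrightarrow> 1 \<le> r x \<and> r x \<le> n"
  using permutes_in_image[of r "{1..n}" x] by simp

lemma permutes_eq_card_le:
  assumes r: "r permutes {1..n}" and x: "x \<in> {1..n}"
  shows "r x = card {y \<in> {1..n}. r y \<le> r x}"
proof -
  have "r ` {y \<in> {1..n}. r y \<le> r x} = {1..r x}"
    using permutes_image[OF r] permutes_interval_bounds[OF r x] by fastforce
  then have "card {y \<in> {1..n}. r y \<le> r x} = card {1..r x}"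
    using card_image[OF permutes_inj_on[OF r]] by metis
  then show ?thesis
    by simp
qed

lemma inj_on_rank_order: "inj_on (rank_order {1..n}) {r. r permutes {1..n}}"
proof (rule inj_onI)
  fix r r' assume r: "r \<in> {r. r permutes {1..n}}" and r': "r' \<in> {r. r permutes {1..n}}"
    and eq: "rank_order {1..n} r = rank_order {1..n} r'"
  show "r = r'"
  proof
    fix x
    show "r x = r' x"
    proof (cases "x \<in> {1..n}")
      case True
      have "r x = card {y \<in> {1..n}. r y \<le> r x}"
        using r True by (intro permutes_eq_card_le) simp_all
      also have "{y \<in> {1..n}. r y \<le> r x} = {y \<in> {1..n}. r' y \<le> r' x}"
      proof -
        have "(y, x) \<in> rank_order {1..n} r \<longleftrightarrow> (y, x) \<in> rank_order {1..n} r'" for y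
          by (simp only: eq)
        then show ?thesis
          using True by (auto simp: rank_order_def)
      qed
      also have "card \<dots> = r' x"
        using r' True by (intro permutes_eq_card_le[symmetric]) simp_all
      finally show ?thesis .
    next
      case False
      then show ?thesis
        using r r' by (simp add: permutes_not_in)
    qed
  qed
qed

lemma linear_order_on_card_le_iff:
  assumes q: "linear_order_on S q" and "finite S" and x: "x \<in> S" and y: "y \<in> S"
  shows "(x, y) \<in> q \<longleftrightarrow> card {z. (z, x) \<in> q} \<le> card {z. (z, y) \<in> q}"
proof -
  have sub: "q \<subseteq> S \<times> S" and refl: "\<And>z. z \<in> S \<Longrightarrow> (z, z) \<in> q" and "trans q"
    and total: "x \<noteq> y \<Longrightarrow> (x, y) \<in> q \<or> (y, x) \<in> q"
    using q x y unfolding linear_order_on_def partial_order_on_def preorder_on_def refl_on_def total_on_def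
    by blast+
  have finite: "finite {z. (z, w) \<in> q}" for w
    using sub \<open>finite S\<close> by (auto intro: finite_subset)
  have down: "{z. (z, u) \<in> q} \<subseteq> {z. (z, v) \<in> q}" if "(u, v) \<in> q" for u v
    using that \<open>trans q\<close> by (auto dest: transD)
  show ?thesis
  proof
    assume "(x, y) \<in> q"
    then show "card {z. (z, x) \<in> q} \<le> card {z. (z, y) \<in> q}"
      by (intro card_mono finite down)
  next
    assume le: "card {z. (z, x) \<in> q} \<le> card {z. (z, y) \<in> q}"
    show "(x, y) \<in> q"
    proof (rule ccontr)
      assume "(x, y) \<notin> q"
      then have "(y, x) \<in> q" "x \<notin> {z. (z, y) \<in> q}" "x \<in> {z. (z, x) \<in> q}"
        using total refl x by auto
      then have "{z. (z, y) \<in> q} \<subset> {z. (z, x) \<in> q}"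
        using down by blast
      then have "card {z. (z, y) \<in> q} < card {z. (z, x) \<in> q}"
        by (rule psubset_card_mono[OF finite])
      then show False
        using le by simp
    qed
  qed
qed

lemma linear_order_on_eq_rank_order:
  assumes q: "linear_order_on {1..n} q"
  obtains r where "r permutes {1..n}" "q = rank_order {1..n} r"
proof -
  define r where "r x = (if x \<in> {1..n} then card {z. (z, x) \<in> q} else x)" for x
  have sub: "q \<subseteq> {1..n} \<times> {1..n}" and refl: "\<And>z. z \<in> {1..n} \<Longrightarrow> (z, z) \<in> q" and "antisym q"
    using q unfolding linear_order_on_def partial_order_on_def preorder_on_def refl_on_def by auto
  have le_iff: "(x, y) \<in> q \<longleftrightarrow> r x \<le> r y" if "x \<in> {1..n}" "y \<in> {1..n}" for x y
    using linear_order_on_card_le_iff[OF q _ that] that by (simp add: r_def)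
  have "r permutes {1..n}"
  proof (rule inj_imp_permutes)
    show "inj_on r {1..n}"
      using le_iff \<open>antisym q\<close> by (intro inj_onI) (metis antisymD order_refl)
    show "r x \<in> {1..n}" if "x \<in> {1..n}" for x
    proof -
      have "x \<in> {z. (z, x) \<in> q}" "{z. (z, x) \<in> q} \<subseteq> {1..n}"
        using refl sub that by auto
      then show ?thesis
        using that card_mono[of "{1..n}" "{z. (z, x) \<in> q}"] card_gt_0_iff[of "{z. (z, x) \<in> q}"]
        by (auto simp: r_def intro: finite_subset)
    qed
  qed (auto simp: r_def)
  moreover have "q = rank_order {1..n} r"
    using sub le_iff unfolding rank_order_def by auto
  ultimately show ?thesis
    using that by blast
qed

text \<open>The condition defining D_X n (A_n n), for the order in which x sits at position r x.\<close>

definition admissible :: "nat \<Rightarrow> (nat \<Rightarrow> nat) \<Rightarrow> bool" where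
  "admissible n r \<longleftrightarrow> (\<forall>i j k. 1 \<le> i \<and> i < j \<and> j < k \<and> k \<le> n \<longrightarrow>
     (even j \<longrightarrow> \<not> (r j < r i \<and> r k < r i)) \<and> (odd j \<longrightarrow> \<not> (r k < r i \<and> r k < r j)))"

definition admissible_perms :: "nat \<Rightarrow> (nat \<Rightarrow> nat) set" where
  "admissible_perms n = {r. r permutes {1..n} \<and> admissible n r}"

lemma rank_order_in_D_X_iff:
  assumes r: "r permutes {1..n}"
  shows "rank_order {1..n} r \<in> D_X n (A_n n) \<longleftrightarrow> admissible n r"
proof -
  have less_iff: "(a, b) \<in> rank_order {1..n} r \<longleftrightarrow> r a < r b"
    if "a \<in> {1..n}" "b \<in> {1..n}" "a \<noteq> b" for a b
    using that inj_eq[OF permutes_inj[OF r], of a b] by (auto simp: rank_order_def)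
  have "j \<in> A_n n \<longleftrightarrow> even j" if "1 \<le> i" "i < j" "j < k" "k \<le> n" for i j k
    using that by (auto simp: A_n_def)
  with less_iff have "(\<forall>i j k. 1 \<le> i \<and> i < j \<and> j < k \<and> k \<le> n \<longrightarrow>
        (j \<in> A_n n \<longrightarrow> \<not> ((j, i) \<in> rank_order {1..n} r \<and> (k, i) \<in> rank_order {1..n} r)) \<and>
        (j \<notin> A_n n \<longrightarrow> \<not> ((k, i) \<in> rank_order {1..n} r \<and> (k, j) \<in> rank_order {1..n} r)))
      \<longleftrightarrow> admissible n r"
    unfolding admissible_def by (intro iff_allI imp_cong refl) auto
  then show ?thesis
    using linear_order_on_rank_order[OF permutes_inj_on[OF r]] by (simp add: D_X_def)
qed

lemma card_D_X: "card (D_X n (A_n n)) = card (admissible_perms n)"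
proof -
  have "D_X n (A_n n) = rank_order {1..n} ` admissible_perms n"
  proof
    show "D_X n (A_n n) \<subseteq> rank_order {1..n} ` admissible_perms n"
    proof
      fix q assume q: "q \<in> D_X n (A_n n)"
      then obtain r where r: "r permutes {1..n}" "q = rank_order {1..n} r"
        using linear_order_on_eq_rank_order[of n q] by (auto simp: D_X_def)
      then show "q \<in> rank_order {1..n} ` admissible_perms n"
        using q rank_order_in_D_X_iff[OF r(1)] by (auto simp: admissible_perms_def)
    qed
    show "rank_order {1..n} ` admissible_perms n \<subseteq> D_X n (A_n n)"
      using rank_order_in_D_X_iff by (auto simp: admissible_perms_def)
  qed
  moreover have "inj_on (rank_order {1..n}) (admissible_perms n)"
    by (rule inj_on_subset[OF inj_on_rank_order]) (auto simp: admissible_perms_def)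
  ultimately show ?thesis
    by (simp add: card_image)
qed

lemma finite_admissible_perms: "finite (admissible_perms n)"
  by (rule finite_subset[OF _ finite_permutations[of "{1..n}"]]) (auto simp: admissible_perms_def)

section \<open>Inserting the largest element\<close>

definition insert_top :: "nat \<Rightarrow> (nat \<Rightarrow> nat) \<Rightarrow> nat \<Rightarrow> nat \<Rightarrow> nat" where
  "insert_top m r p x =
     (if x \<in> {1..m} then (if r x \<le> p then r x else Suc (r x)) else if x = Suc m then Suc p else x)"

definition delete_top :: "nat \<Rightarrow> (nat \<Rightarrow> nat) \<Rightarrow> nat \<Rightarrow> nat" where
  "delete_top m r x = (if x \<in> {1..m} then (if r (Suc m) < r x then r x - 1 else r x) else x)"

lemma insert_top_less_iff:
  "a \<in> {1..m} \<Longrightarrow> b \<in> {1..m} \<Longrightarrow> insert_top m r p a < insert_top m r p b \<longleftrightarrow> r a < r b"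
  by (auto simp: insert_top_def)

lemma insert_top_top_less_iff:
  "a \<in> {1..m} \<Longrightarrow> insert_top m r p (Suc m) < insert_top m r p a \<longleftrightarrow> p < r a"
  by (auto simp: insert_top_def)

lemma insert_top_permutes:
  assumes r: "r permutes {1..m}" and "p \<le> m"
  shows "insert_top m r p permutes {1..Suc m}"
proof (rule inj_imp_permutes)
  show "inj_on (insert_top m r p) {1..Suc m}"
  proof (rule inj_onI)
    fix a b assume ab: "a \<in> {1..Suc m}" "b \<in> {1..Suc m}" "insert_top m r p a = insert_top m r p b"
    have top: "insert_top m r p x \<noteq> insert_top m r p (Suc m)" if "x \<in> {1..m}" for x
      using that by (auto simp: insert_top_def)
    show "a = b"
    proof (cases "a = Suc m \<or> b = Suc m")
      case True
      then show ?thesis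
        using ab top[of a] top[of b] by fastforce
    next
      case False
      then have "a \<in> {1..m}" "b \<in> {1..m}"
        using ab(1,2) by auto
      then have "r a = r b"
        using ab(3) insert_top_less_iff[of a m b r p] insert_top_less_iff[of b m a r p] by simp
      then show ?thesis
        by (rule injD[OF permutes_inj[OF r]])
    qed
  qed
  show "insert_top m r p x \<in> {1..Suc m}" if "x \<in> {1..Suc m}" for x
    using that \<open>p \<le> m\<close> permutes_interval_bounds[OF r, of x] by (auto simp: insert_top_def)
qed (auto simp: insert_top_def)

lemma delete_top_less_iff:
  assumes r: "r permutes {1..Suc m}" and "a \<in> {1..m}" "b \<in> {1..m}"
  shows "delete_top m r a < delete_top m r b \<longleftrightarrow> r a < r b"
proof -
  have "r a \<noteq> r (Suc m)" "r b \<noteq> r (Suc m)"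
    using assms(2,3) injD[OF permutes_inj[OF r]] by fastforce+
  then show ?thesis
    using assms(2,3) by (auto simp: delete_top_def)
qed

lemma delete_top_permutes:
  assumes r: "r permutes {1..Suc m}"
  shows "delete_top m r permutes {1..m}"
proof (rule inj_imp_permutes)
  show "inj_on (delete_top m r) {1..m}"
  proof (rule inj_onI)
    fix a b assume ab: "a \<in> {1..m}" "b \<in> {1..m}" "delete_top m r a = delete_top m r b"
    then have "r a = r b"
      using delete_top_less_iff[OF r, of a b] delete_top_less_iff[OF r, of b a] by simp
    then show "a = b"
      by (rule injD[OF permutes_inj[OF r]])
  qed
  show "delete_top m r x \<in> {1..m}" if "x \<in> {1..m}" for x
  proof -
    have "r x \<noteq> r (Suc m)"
      using that injD[OF permutes_inj[OF r]] by fastforce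
    then show ?thesis
      using that permutes_interval_bounds[OF r, of x] permutes_interval_bounds[OF r, of "Suc m"]
      by (auto simp: delete_top_def)
  qed
qed (auto simp: delete_top_def)

lemma delete_insert_top: "r permutes {1..m} \<Longrightarrow> delete_top m (insert_top m r p) = r"
  by (auto simp: fun_eq_iff delete_top_def insert_top_def permutes_not_in)

lemma insert_delete_top:
  assumes r: "r permutes {1..Suc m}"
  shows "insert_top m (delete_top m r) (r (Suc m) - 1) = r"
proof -
  have "r x \<noteq> r (Suc m)" if "x \<in> {1..m}" for x
    using that injD[OF permutes_inj[OF r]] by fastforce
  moreover have "1 \<le> r (Suc m)" "r (Suc m) \<le> Suc m"
    using permutes_interval_bounds[OF r, of "Suc m"] by auto
  ultimately show ?thesis
    using permutes_not_in[OF r] by (fastforce simp: fun_eq_iff delete_top_def insert_top_def)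
qed

definition good_slot :: "(nat \<Rightarrow> nat) \<Rightarrow> nat \<Rightarrow> nat \<Rightarrow> bool" where
  "good_slot r m p \<longleftrightarrow> (\<forall>i j. 1 \<le> i \<and> i < j \<and> j \<le> m \<longrightarrow>
     (odd j \<longrightarrow> min (r i) (r j) \<le> p) \<and> (even j \<longrightarrow> r j < r i \<longrightarrow> r i \<le> p))"

definition good_slots :: "nat \<Rightarrow> (nat \<Rightarrow> nat) \<Rightarrow> nat set" where
  "good_slots m r = {p. p \<le> m \<and> good_slot r m p}"

lemma admissible_Suc_iff:
  "admissible (Suc m) r \<longleftrightarrow> admissible m r \<and>
     (\<forall>i j. 1 \<le> i \<and> i < j \<and> j \<le> m \<longrightarrow>
        (even j \<longrightarrow> \<not> (r j < r i \<and> r (Suc m) < r i)) \<and>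
        (odd j \<longrightarrow> \<not> (r (Suc m) < r i \<and> r (Suc m) < r j)))"
  (is "_ \<longleftrightarrow> _ \<and> ?top")
proof (intro iffI conjI)
  assume A: "admissible (Suc m) r"
  show "admissible m r"
    unfolding admissible_def
  proof (intro allI impI)
    fix i j k assume "1 \<le> i \<and> i < j \<and> j < k \<and> k \<le> m"
    then show "(even j \<longrightarrow> \<not> (r j < r i \<and> r k < r i)) \<and> (odd j \<longrightarrow> \<not> (r k < r i \<and> r k < r j))"
      using A[unfolded admissible_def, rule_format, of i j k] by simp
  qed
  show ?top
  proof (intro allI impI)
    fix i j assume "1 \<le> i \<and> i < j \<and> j \<le> m"
    then show "(even j \<longrightarrow> \<not> (r j < r i \<and> r (Suc m) < r i)) \<and>
        (odd j \<longrightarrow> \<not> (r (Suc m) < r i \<and> r (Suc m) < r j))"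
      using A[unfolded admissible_def, rule_format, of i j "Suc m"] by simp
  qed
next
  assume "admissible m r \<and> ?top"
  then have A: "admissible m r" and top: ?top
    by blast+
  show "admissible (Suc m) r"
    unfolding admissible_def
  proof (intro allI impI)
    fix i j k assume ijk: "1 \<le> i \<and> i < j \<and> j < k \<and> k \<le> Suc m"
    show "(even j \<longrightarrow> \<not> (r j < r i \<and> r k < r i)) \<and> (odd j \<longrightarrow> \<not> (r k < r i \<and> r k < r j))"
    proof (cases "k = Suc m")
      case True
      then show ?thesis
        using ijk top[rule_format, of i j] by simp
    next
      case False
      then show ?thesis
        using ijk A[unfolded admissible_def, rule_format, of i j k] by simp
    qed
  qed
qed

lemma admissible_insert_top_iff:
  "admissible (Suc m) (insert_top m r p) \<longleftrightarrow> admissible m r \<and> good_slot r m p"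
proof -
  have "admissible m (insert_top m r p) \<longleftrightarrow> admissible m r"
    unfolding admissible_def by (intro iff_allI imp_cong refl) (simp add: insert_top_less_iff)
  moreover have "(\<forall>i j. 1 \<le> i \<and> i < j \<and> j \<le> m \<longrightarrow>
        (even j \<longrightarrow> \<not> (insert_top m r p j < insert_top m r p i \<and>
                         insert_top m r p (Suc m) < insert_top m r p i)) \<and>
        (odd j \<longrightarrow> \<not> (insert_top m r p (Suc m) < insert_top m r p i \<and>
                        insert_top m r p (Suc m) < insert_top m r p j)))
      \<longleftrightarrow> good_slot r m p"
    unfolding good_slot_def
    by (intro iff_allI imp_cong refl) (auto simp: insert_top_less_iff insert_top_top_less_iff)
  ultimately show ?thesis
    by (simp only: admissible_Suc_iff)
qed

lemma bij_betw_insert_top: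
  "bij_betw (\<lambda>(r, p). insert_top m r p)
     (SIGMA r:admissible_perms m. good_slots m r) (admissible_perms (Suc m))"
proof (rule bij_betw_byWitness[where f'="\<lambda>r. (delete_top m r, r (Suc m) - 1)"])
  show "\<forall>a \<in> (SIGMA r:admissible_perms m. good_slots m r).
      (\<lambda>r. (delete_top m r, r (Suc m) - 1)) ((\<lambda>(r, p). insert_top m r p) a) = a"
    by (auto simp: admissible_perms_def delete_insert_top insert_top_def)
  show "\<forall>r \<in> admissible_perms (Suc m). (\<lambda>(r, p). insert_top m r p) (delete_top m r, r (Suc m) - 1) = r"
    using insert_delete_top by (auto simp: admissible_perms_def)
  show "(\<lambda>(r, p). insert_top m r p) ` (SIGMA r:admissible_perms m. good_slots m r) \<subseteq> admissible_perms (Suc m)"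
  proof clarify
    fix r p assume "r \<in> admissible_perms m" "p \<in> good_slots m r"
    then show "insert_top m r p \<in> admissible_perms (Suc m)"
      using insert_top_permutes[of r m p]
      by (simp add: admissible_perms_def good_slots_def admissible_insert_top_iff)
  qed
  show "(\<lambda>r. (delete_top m r, r (Suc m) - 1)) ` admissible_perms (Suc m) \<subseteq>
      (SIGMA r:admissible_perms m. good_slots m r)"
  proof clarify
    fix r assume "r \<in> admissible_perms (Suc m)"
    then have r: "r permutes {1..Suc m}" and "admissible (Suc m) r"
      by (auto simp: admissible_perms_def)
    then have "admissible (Suc m) (insert_top m (delete_top m r) (r (Suc m) - 1))"
      using insert_delete_top[OF r] by simp
    moreover have "r (Suc m) \<le> Suc m"
      using permutes_interval_bounds[OF r, of "Suc m"] by simp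
    then have "r (Suc m) - 1 \<le> m"
      by simp
    ultimately show "delete_top m r \<in> admissible_perms m \<and> r (Suc m) - 1 \<in> good_slots m (delete_top m r)"
      using delete_top_permutes[OF r]
      by (simp add: admissible_perms_def good_slots_def admissible_insert_top_iff)
  qed
qed

lemma good_slot_mono: "good_slot r m p \<Longrightarrow> p \<le> q \<Longrightarrow> good_slot r m q"
  unfolding good_slot_def by (meson order_trans)

lemma good_slot_ge:
  assumes r: "r permutes {1..m}" and "m \<le> p"
  shows "good_slot r m p"
  unfolding good_slot_def
proof (intro allI impI)
  fix i j assume "1 \<le> i \<and> i < j \<and> j \<le> m"
  then have "r i \<le> m"
    using permutes_interval_bounds[OF r, of i] by simp
  then show "(odd j \<longrightarrow> min (r i) (r j) \<le> p) \<and> (even j \<longrightarrow> r j < r i \<longrightarrow> r i \<le> p)"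
    using \<open>m \<le> p\<close> by auto
qed

lemma good_slots_interval:
  assumes r: "r permutes {1..m}"
  obtains t where "t \<le> m" "good_slots m r = {t..m}"
proof -
  define S where "S = good_slots m r"
  have "finite S" "m \<in> S"
    unfolding S_def good_slots_def using good_slot_ge[OF r] by simp_all
  define t where "t = Min S"
  have "t \<in> S" "\<And>q. q \<in> S \<Longrightarrow> t \<le> q"
    unfolding t_def using \<open>finite S\<close> \<open>m \<in> S\<close> by (auto intro: Min_in)
  then have "S = {t..m}"
    unfolding S_def good_slots_def using good_slot_mono[of r m t] by fastforce
  moreover have "t \<le> m"
    using \<open>m \<in> S\<close> \<open>\<And>q. q \<in> S \<Longrightarrow> t \<le> q\<close> by blast
  ultimately show ?thesis
    using that unfolding S_def by blast
qed

lemma card_good_slots_pos: "r permutes {1..m} \<Longrightarrow> 0 < card (good_slots m r)"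
  by (metis atLeastAtMost_iff card_gt_0_iff empty_iff finite_atLeastAtMost good_slots_interval order_refl)

lemma good_slot_Suc_iff:
  "good_slot r (Suc m) q \<longleftrightarrow> good_slot r m q \<and>
     (\<forall>i \<in> {1..m}. (odd (Suc m) \<longrightarrow> min (r i) (r (Suc m)) \<le> q) \<and>
                   (even (Suc m) \<longrightarrow> r (Suc m) < r i \<longrightarrow> r i \<le> q))"
  (is "_ \<longleftrightarrow> _ \<and> ?top")
proof (intro iffI conjI)
  assume G: "good_slot r (Suc m) q"
  show "good_slot r m q"
    using G unfolding good_slot_def by (meson le_SucI)
  show ?top
    using G unfolding good_slot_def by (meson atLeastAtMost_iff le_imp_less_Suc order_refl)
next
  assume "good_slot r m q \<and> ?top"
  then have G: "good_slot r m q" and top: ?top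
    by blast+
  show "good_slot r (Suc m) q"
    unfolding good_slot_def
  proof (intro allI impI)
    fix i j assume ij: "1 \<le> i \<and> i < j \<and> j \<le> Suc m"
    show "(odd j \<longrightarrow> min (r i) (r j) \<le> q) \<and> (even j \<longrightarrow> r j < r i \<longrightarrow> r i \<le> q)"
    proof (cases "j = Suc m")
      case True
      then show ?thesis
        using ij top by auto
    next
      case False
      with ij have "j \<le> m"
        by simp
      then show ?thesis
        using ij G[unfolded good_slot_def, rule_format, of i j] by simp
    qed
  qed
qed

lemma good_slot_insert_top_iff:
  assumes "good_slot r m p"
  shows "good_slot (insert_top m r p) m q \<longleftrightarrow> good_slot r m q"
proof -
  have "((odd j \<longrightarrow> min (insert_top m r p i) (insert_top m r p j) \<le> q) \<and>
         (even j \<longrightarrow> insert_top m r p j < insert_top m r p i \<longrightarrow> insert_top m r p i \<le> q)) \<longleftrightarrow>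
        ((odd j \<longrightarrow> min (r i) (r j) \<le> q) \<and> (even j \<longrightarrow> r j < r i \<longrightarrow> r i \<le> q))"
    if ij: "1 \<le> i \<and> i < j \<and> j \<le> m" for i j
  proof -
    have "(odd j \<longrightarrow> min (r i) (r j) \<le> p) \<and> (even j \<longrightarrow> r j < r i \<longrightarrow> r i \<le> p)"
      using assms ij unfolding good_slot_def by blast
    moreover have "i \<in> {1..m}" "j \<in> {1..m}"
      using ij by auto
    ultimately show ?thesis
      by (auto simp: insert_top_def)
  qed
  then show ?thesis
    unfolding good_slot_def by (intro iff_allI imp_cong refl) blast
qed

lemma good_slot_insert_top_new_pairs_iff:
  assumes r: "r permutes {1..m}" and "1 \<le> m" "p \<le> m"
  shows "(\<forall>i \<in> {1..m}.
            (odd (Suc m) \<longrightarrow> min (insert_top m r p i) (insert_top m r p (Suc m)) \<le> q) \<and>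
            (even (Suc m) \<longrightarrow> insert_top m r p (Suc m) < insert_top m r p i \<longrightarrow> insert_top m r p i \<le> q))
    \<longleftrightarrow> (if even (Suc m) then p < m \<longrightarrow> Suc m \<le> q else if p < m then Suc p \<le> q else m \<le> q)"
    (is "(\<forall>i \<in> {1..m}. ?new i) \<longleftrightarrow> ?bound")
proof
  assume new: "\<forall>i \<in> {1..m}. ?new i"
  obtain i where i: "i \<in> {1..m}" "r i = m"
    using \<open>1 \<le> m\<close> permutes_image[OF r] by (metis atLeastAtMost_iff imageE order_refl)
  then have "insert_top m r p i = (if p < m then Suc m else m)" "insert_top m r p (Suc m) = Suc p"
    using \<open>p \<le> m\<close> by (auto simp: insert_top_def)
  then show ?bound
    using bspec[OF new i(1)] \<open>p \<le> m\<close> by (auto split: if_splits)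
next
  assume ?bound
  moreover have "r i \<le> m" if "i \<in> {1..m}" for i
    using permutes_interval_bounds[OF r that] by simp
  ultimately show "\<forall>i \<in> {1..m}. ?new i"
    using \<open>p \<le> m\<close> by (fastforce simp: insert_top_def split: if_splits)
qed

lemma good_slots_insert_top:
  assumes r: "r permutes {1..m}" and "1 \<le> m" and p: "p \<in> good_slots m r"
  shows "good_slots (Suc m) (insert_top m r p) =
    (if even (Suc m) then if p < m then {Suc m} else insert (Suc m) (good_slots m r)
     else if p < m then {Suc p..Suc m} else {m, Suc m})"
proof -
  have "p \<le> m" and good: "good_slot r m p"
    using p by (auto simp: good_slots_def)
  have "good_slot (insert_top m r p) (Suc m) q \<longleftrightarrow> good_slot r m q \<and>
      (if even (Suc m) then p < m \<longrightarrow> Suc m \<le> q else if p < m then Suc p \<le> q else m \<le> q)" for q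
    unfolding good_slot_Suc_iff good_slot_insert_top_iff[OF good]
    by (simp only: good_slot_insert_top_new_pairs_iff[OF r \<open>1 \<le> m\<close> \<open>p \<le> m\<close>])
  then show ?thesis
    using good_slot_ge[OF r] good_slot_mono[OF good] \<open>p \<le> m\<close>
    by (auto simp: good_slots_def)
qed

lemma card_good_slots_insert_top:
  assumes r: "r permutes {1..m}" and "1 \<le> m" and p: "p \<in> good_slots m r"
  shows "card (good_slots (Suc m) (insert_top m r p)) =
    (if even (Suc m) then if p < m then 1 else Suc (card (good_slots m r))
     else if p < m then Suc m - p else 2)"
proof -
  have "Suc m \<notin> good_slots m r" "finite (good_slots m r)"
    by (simp_all add: good_slots_def)
  then show ?thesis
    using good_slots_insert_top[OF assms] by simp
qed

section \<open>Summing over the generating tree\<close>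

text \<open>
  children_sum n f s sums f over the labels of the children of a node with label s when n is
  inserted, as computed in card_good_slots_insert_top.
\<close>

definition children_sum :: "nat \<Rightarrow> (nat \<Rightarrow> nat) \<Rightarrow> nat \<Rightarrow> nat" where
  "children_sum n f s = (if even n then (s - 1) * f 1 + f (Suc s) else f 2 + (\<Sum>t = 2..s. f t))"

lemma sum_good_slots_insert_top:
  assumes r: "r permutes {1..m}" and "1 \<le> m"
  shows "(\<Sum>p \<in> good_slots m r. f (card (good_slots (Suc m) (insert_top m r p)))) =
    children_sum (Suc m) f (card (good_slots m r))"
proof -
  obtain t where "t \<le> m" and S: "good_slots m r = {t..m}"
    using good_slots_interval[OF r] .
  have child: "card (good_slots (Suc m) (insert_top m r p)) =
      (if even (Suc m) then if p < m then 1 else Suc (Suc m - t) else if p < m then Suc m - p else 2)"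
    if "p \<in> {t..m}" for p
    using card_good_slots_insert_top[OF r \<open>1 \<le> m\<close>, of p] that unfolding S by simp
  have "{t..m} = insert m {t..<m}"
    using \<open>t \<le> m\<close> by auto
  moreover have "(\<Sum>p = t..<m. f (card (good_slots (Suc m) (insert_top m r p)))) =
      (\<Sum>p = t..<m. f (if even (Suc m) then 1 else Suc m - p))"
    by (rule sum.cong) (simp_all add: child)
  ultimately have "(\<Sum>p \<in> good_slots m r. f (card (good_slots (Suc m) (insert_top m r p)))) =
      f (if even (Suc m) then Suc (Suc m - t) else 2) +
      (\<Sum>p = t..<m. f (if even (Suc m) then 1 else Suc m - p))"
    using child[of m] \<open>t \<le> m\<close> unfolding S by simp
  also have "\<dots> = children_sum (Suc m) f (Suc m - t)"
  proof (cases "even (Suc m)")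
    case True
    then show ?thesis
      using \<open>t \<le> m\<close> by (simp add: children_sum_def Suc_diff_le)
  next
    case False
    have "(\<Sum>p = t..<m. f (Suc m - p)) = (\<Sum>q = 2..Suc m - t. f q)"
      using \<open>t \<le> m\<close>
      by (intro sum.reindex_bij_witness[where i="\<lambda>q. Suc m - q" and j="\<lambda>p. Suc m - p"]) auto
    then show ?thesis
      using False by (simp add: children_sum_def)
  qed
  finally show ?thesis
    by (simp add: S)
qed

lemma sum_admissible_perms_Suc:
  assumes "1 \<le> m"
  shows "(\<Sum>r \<in> admissible_perms (Suc m). f (card (good_slots (Suc m) r))) =
    (\<Sum>r \<in> admissible_perms m. children_sum (Suc m) f (card (good_slots m r)))"
proof -
  have "(\<Sum>r \<in> admissible_perms (Suc m). f (card (good_slots (Suc m) r))) =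
      (\<Sum>(r, p) \<in> (SIGMA r:admissible_perms m. good_slots m r).
         f (card (good_slots (Suc m) (insert_top m r p))))"
    using sum.reindex_bij_betw[OF bij_betw_insert_top, of "\<lambda>r. f (card (good_slots (Suc m) r))"]
    by (simp add: case_prod_unfold)
  also have "\<dots> = (\<Sum>r \<in> admissible_perms m. \<Sum>p \<in> good_slots m r.
      f (card (good_slots (Suc m) (insert_top m r p))))"
    by (rule sum.Sigma[symmetric]) (auto simp: finite_admissible_perms good_slots_def)
  also have "\<dots> = (\<Sum>r \<in> admissible_perms m. children_sum (Suc m) f (card (good_slots m r)))"
    using assms by (intro sum.cong refl sum_good_slots_insert_top) (auto simp: admissible_perms_def)
  finally show ?thesis .
qed

definition tail_sum :: "(nat \<Rightarrow> nat) \<Rightarrow> nat \<Rightarrow> nat" where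
  "tail_sum f s = (\<Sum>t = 3..Suc s. f t)"

definition pair_step :: "(nat \<Rightarrow> nat) \<Rightarrow> nat \<Rightarrow> nat" where
  "pair_step f s = Suc s * f 2 + tail_sum f s"

lemma children_sum_pair: "even n \<Longrightarrow> children_sum n (children_sum (Suc n) f) = pair_step f"
proof (rule ext)
  fix s assume "even n"
  show "children_sum n (children_sum (Suc n) f) s = pair_step f s"
  proof (cases s)
    case (Suc k)
    have "(\<Sum>t = 2..Suc (Suc k). f t) = f 2 + tail_sum f (Suc k)"
      using sum.atLeast_Suc_atMost[of 2 "Suc (Suc k)" f] by (simp add: tail_sum_def)
    then show ?thesis
      using \<open>even n\<close> Suc by (simp add: children_sum_def pair_step_def algebra_simps)
  qed (use \<open>even n\<close> in \<open>simp add: children_sum_def pair_step_def tail_sum_def\<close>)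
qed

lemma sum_admissible_perms_add_2:
  "(\<Sum>r \<in> admissible_perms (2 * m + 3). f (card (good_slots (2 * m + 3) r))) =
    (\<Sum>r \<in> admissible_perms (2 * m + 1). pair_step f (card (good_slots (2 * m + 1) r)))"
proof -
  have "2 * m + 3 = Suc (Suc (2 * m + 1))" "even (Suc (2 * m + 1))"
    by simp_all
  then show ?thesis
    by (simp only: sum_admissible_perms_Suc le_add2 Suc_le_mono children_sum_pair le_SucI)
qed

lemma admissible_perms_1: "admissible_perms 1 = {id}"
  by (auto simp: admissible_perms_def admissible_def)

lemma good_slots_1_id: "good_slots 1 id = {0, 1}"
  by (auto simp: good_slots_def good_slot_def)

lemma sum_admissible_perms_odd:
  "(\<Sum>r \<in> admissible_perms (2 * m + 1). f (card (good_slots (2 * m + 1) r))) = (pair_step ^^ m) f 2"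
proof (induction m arbitrary: f)
  case 0
  have "(\<Sum>r \<in> admissible_perms 1. f (card (good_slots 1 r))) = f 2"
    unfolding admissible_perms_1 using good_slots_1_id by (simp add: numeral_2_eq_2)
  then show ?case
    by simp
next
  case (Suc m)
  have "2 * Suc m + 1 = 2 * m + 3"
    by simp
  then show ?case
    by (simp only: sum_admissible_perms_add_2 Suc.IH funpow_Suc_right comp_def)
qed

definition pair_count :: "nat \<Rightarrow> nat" where
  "pair_count m = (pair_step ^^ m) (\<lambda>s. s) 2"

lemma card_admissible_perms_1: "card (admissible_perms 1) = 1"
  unfolding admissible_perms_1 by simp

lemma card_admissible_perms_even: "card (admissible_perms (2 * m + 2)) = pair_count m"
proof -
  have "card (admissible_perms (Suc (2 * m + 1))) =
      (\<Sum>r \<in> admissible_perms (2 * m + 1). children_sum (Suc (2 * m + 1)) (\<lambda>_. 1) (card (good_slots (2 * m + 1) r)))"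
    using sum_admissible_perms_Suc[of "2 * m + 1" "\<lambda>_. 1"] by simp
  also have "\<dots> = (\<Sum>r \<in> admissible_perms (2 * m + 1). card (good_slots (2 * m + 1) r))"
    using card_good_slots_pos by (intro sum.cong refl) (auto simp: children_sum_def admissible_perms_def)
  also have "\<dots> = pair_count m"
    unfolding pair_count_def by (rule sum_admissible_perms_odd)
  finally show ?thesis
    by simp
qed

lemma even_card_admissible_perms_odd: "even (card (admissible_perms (2 * m + 3)))"
proof -
  have "card (admissible_perms (2 * m + 3)) =
      (\<Sum>r \<in> admissible_perms (2 * m + 1). pair_step (\<lambda>_. 1) (card (good_slots (2 * m + 1) r)))"
    using sum_admissible_perms_add_2[of "\<lambda>_. 1" m] by simp
  also have "\<dots> = (\<Sum>r \<in> admissible_perms (2 * m + 1). 2 * card (good_slots (2 * m + 1) r))"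
    using card_good_slots_pos
    by (intro sum.cong refl) (auto simp: pair_step_def tail_sum_def admissible_perms_def)
  finally show ?thesis
    by (simp add: sum_distrib_left[symmetric])
qed

section \<open>Catalan numbers modulo 2\<close>

fun catalan :: "nat \<Rightarrow> nat" where
  "catalan 0 = 1"
| "catalan (Suc n) = (\<Sum>i\<le>n. catalan i * catalan (n - i))"

declare catalan.simps(2) [simp del]

lemma even_sum_mirror_products_iff:
  fixes f :: "nat \<Rightarrow> nat"
  shows "even (\<Sum>i\<le>n. f i * f (n - i)) \<longleftrightarrow> odd n \<or> even (f (n div 2))"
proof -
  define g where "g i = f i * f (n - i)" for i
  define low where "low = {i. 2 * i < n}"
  define high where "high = {i. i \<le> n \<and> n < 2 * i}"
  define mid where "mid = {i. 2 * i = n}"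
  have split: "{..n} = low \<union> high \<union> mid" and disjoint: "low \<inter> high = {}" "(low \<union> high) \<inter> mid = {}"
    by (auto simp: low_def high_def mid_def)
  have finite: "finite low" "finite high" "finite mid"
    by (auto simp: low_def high_def mid_def intro: finite_subset[of _ "{..n}"])
  have "sum g high = sum g low"
    by (rule sum.reindex_bij_witness[where i="\<lambda>i. n - i" and j="\<lambda>i. n - i"])
       (auto simp: low_def high_def g_def)
  then have "sum g {..n} = 2 * sum g low + sum g mid"
    unfolding split using finite disjoint by (simp add: sum.union_disjoint)
  moreover have "mid = (if even n then {n div 2} else {})"
    by (auto simp: mid_def)
  ultimately show ?thesis
    by (auto simp: g_def)
qed

lemma odd_catalan_Suc_iff: "odd (catalan (Suc n)) \<longleftrightarrow> even n \<and> odd (catalan (n div 2))"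
  using even_sum_mirror_products_iff[of catalan n] by (auto simp: catalan.simps(2))

lemma add_2_eq_power_of_two_iff:
  "(\<exists>t. n + 2 = 2 ^ t) \<longleftrightarrow> even n \<and> (\<exists>t. n div 2 + 1 = (2::nat) ^ t)"
proof
  assume "\<exists>t. n + 2 = 2 ^ t"
  then obtain t where t: "n + 2 = 2 ^ t" by blast
  then obtain u where "t = Suc u" by (cases t) auto
  with t have "n = 2 * (2 ^ u - 1)" by simp
  then show "even n \<and> (\<exists>t. n div 2 + 1 = (2::nat) ^ t)" by auto
next
  assume "even n \<and> (\<exists>t. n div 2 + 1 = (2::nat) ^ t)"
  then obtain t where "even n" "n div 2 + 1 = (2::nat) ^ t" by blast
  then have "n + 2 = 2 ^ Suc t" by auto
  then show "\<exists>t. n + 2 = 2 ^ t" by blast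
qed

lemma odd_catalan_iff: "odd (catalan n) \<longleftrightarrow> (\<exists>t. n + 1 = 2 ^ t)"
proof (induction n rule: less_induct)
  case (less n)
  show ?case
  proof (cases n)
    case 0
    then show ?thesis by (auto intro: exI[of _ 0])
  next
    case (Suc k)
    then have "odd (catalan n) \<longleftrightarrow> even k \<and> (\<exists>t. k div 2 + 1 = 2 ^ t)"
      using less.IH[of "k div 2"] by (auto simp: odd_catalan_Suc_iff)
    also have "\<dots> \<longleftrightarrow> (\<exists>t. n + 1 = 2 ^ t)"
      using add_2_eq_power_of_two_iff[of k] Suc by simp
    finally show ?thesis .
  qed
qed

lemma catalan_Suc_Suc:
  "catalan (Suc (Suc k)) = 2 * catalan (Suc k) + (\<Sum>i<k. catalan (Suc i) * catalan (k - i))"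
proof -
  have "catalan (Suc (Suc k)) = catalan 0 * catalan (Suc k) + (\<Sum>i\<le>k. catalan (Suc i) * catalan (k - i))"
    unfolding catalan.simps(2)[of "Suc k"] by (simp only: sum.atMost_Suc_shift) simp
  also have "(\<Sum>i\<le>k. catalan (Suc i) * catalan (k - i)) = (\<Sum>i<k. catalan (Suc i) * catalan (k - i)) + catalan (Suc k)"
    by (simp add: lessThan_Suc_atMost[symmetric])
  finally show ?thesis by simp
qed

section \<open>Iterating pair_step through the Catalan series\<close>

definition catalan_fps :: "nat fps" where
  "catalan_fps = Abs_fps catalan"

lemma catalan_fps_eq: "catalan_fps = 1 + fps_X * catalan_fps ^ 2"
proof (rule fps_ext)
  fix n
  show "fps_nth catalan_fps n = fps_nth (1 + fps_X * catalan_fps ^ 2) n"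
  proof (cases n)
    case (Suc k)
    have "fps_nth (catalan_fps ^ 2) k = (\<Sum>i=0..k. catalan i * catalan (k - i))"
      by (simp add: power2_eq_square fps_mult_nth catalan_fps_def)
    then show ?thesis
      using Suc by (simp add: catalan_fps_def atLeast0AtMost catalan.simps(2))
  qed (simp add: catalan_fps_def)
qed

lemma catalan_fps_power_Suc: "catalan_fps ^ Suc h = 1 + fps_X * (\<Sum>i\<le>h. catalan_fps ^ (i + 2))"
proof (induction h)
  case 0
  show ?case using catalan_fps_eq by (simp add: power2_eq_square)
next
  case (Suc h)
  have "catalan_fps ^ Suc (Suc h) = catalan_fps ^ Suc h * (1 + fps_X * catalan_fps ^ 2)"
    using catalan_fps_eq by (metis power_Suc2)
  also have "\<dots> = catalan_fps ^ Suc h + fps_X * catalan_fps ^ (Suc h + 2)"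
    by (simp add: algebra_simps power2_eq_square)
  finally show ?case
    by (simp only: Suc.IH sum.atMost_Suc distrib_left add.assoc)
qed

lemma tail_sum_pow_Suc: "(tail_sum ^^ Suc j) f s = (\<Sum>t = 3..Suc s. (tail_sum ^^ j) f t)"
  by (simp add: tail_sum_def)

lemma tail_sum_pow_add: "(tail_sum ^^ j) (\<lambda>s. f s + g s) s = (tail_sum ^^ j) f s + (tail_sum ^^ j) g s"
  by (induction j arbitrary: s) (simp_all only: funpow_0 tail_sum_pow_Suc sum.distrib)

lemma tail_sum_pow_mult: "(tail_sum ^^ j) (\<lambda>s. c * f s) s = c * (tail_sum ^^ j) f s"
  by (induction j arbitrary: s) (simp_all only: funpow_0 tail_sum_pow_Suc sum_distrib_left)

lemma tail_sum_pow_cong: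
  assumes "\<And>t. 2 \<le> t \<Longrightarrow> f t = g t" and "2 \<le> s"
  shows "(tail_sum ^^ j) f s = (tail_sum ^^ j) g s"
  using assms(2)
proof (induction j arbitrary: s)
  case 0
  then show ?case using assms(1) by simp
next
  case (Suc j)
  then show ?case unfolding tail_sum_pow_Suc by (intro sum.cong) auto
qed

lemma tail_sum_pow_one: "2 \<le> s \<Longrightarrow> (tail_sum ^^ j) (\<lambda>_. 1) s = fps_nth (catalan_fps ^ (s - 1)) j"
proof (induction j arbitrary: s)
  case 0
  then show ?case by (simp add: fps_power_zeroth catalan_fps_def)
next
  case (Suc j)
  have "(tail_sum ^^ Suc j) (\<lambda>_. 1) s = (\<Sum>t = 3..Suc s. fps_nth (catalan_fps ^ (t - 1)) j)"
    unfolding tail_sum_pow_Suc using Suc.IH by simp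
  also have "\<dots> = (\<Sum>i\<le>s - 2. fps_nth (catalan_fps ^ (i + 2)) j)"
    using Suc.prems
    by (intro sum.reindex_bij_witness[where i="\<lambda>i. i + 3" and j="\<lambda>t. t - 3"])
       (auto simp: numeral_3_eq_3 Suc_diff_Suc simp del: power_Suc)
  also have "\<dots> = fps_nth (catalan_fps ^ Suc (s - 2)) (Suc j)"
    unfolding catalan_fps_power_Suc by (simp add: fps_sum_nth)
  finally show ?case
    using Suc.prems by (simp add: Suc_diff_Suc numeral_2_eq_2)
qed

lemma tail_sum_pow_shifted_id:
  "(tail_sum ^^ j) (\<lambda>s. s + c) 2 = catalan (Suc j) + (c + 1) * catalan j"
proof -
  have catalan: "(tail_sum ^^ i) (\<lambda>_. 1) 2 = catalan i" for i
    using tail_sum_pow_one[of 2 i] by (simp add: catalan_fps_def)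
  have "(tail_sum ^^ j) (\<lambda>s. s + c) 2 = (tail_sum ^^ j) (\<lambda>s. tail_sum (\<lambda>_. 1) s + (c + 1) * 1) 2"
    by (rule tail_sum_pow_cong) (auto simp: tail_sum_def)
  also have "\<dots> = (tail_sum ^^ Suc j) (\<lambda>_. 1) 2 + (c + 1) * (tail_sum ^^ j) (\<lambda>_. 1) 2"
    by (simp only: tail_sum_pow_add tail_sum_pow_mult funpow_Suc_right comp_def)
  finally show ?thesis
    by (simp only: catalan)
qed

lemma pair_step_pow_at_2:
  "(pair_step ^^ j) f 2 =
     (tail_sum ^^ j) f 2 + (\<Sum>i<j. (tail_sum ^^ i) (\<lambda>s. s + 1) 2 * (pair_step ^^ (j - 1 - i)) f 2)"
proof (induction j arbitrary: f)
  case 0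
  then show ?case by simp
next
  case (Suc j)
  have "(tail_sum ^^ j) (pair_step f) 2 = f 2 * (tail_sum ^^ j) (\<lambda>s. s + 1) 2 + (tail_sum ^^ Suc j) f 2"
  proof -
    have "(tail_sum ^^ j) (pair_step f) 2 = (tail_sum ^^ j) (\<lambda>s. f 2 * (s + 1) + tail_sum f s) 2"
      by (rule tail_sum_pow_cong) (auto simp: pair_step_def)
    then show ?thesis
      by (simp only: tail_sum_pow_add tail_sum_pow_mult funpow_Suc_right comp_def)
  qed
  moreover have "(pair_step ^^ (j - 1 - i)) (pair_step f) 2 = (pair_step ^^ (Suc j - 1 - i)) f 2"
    if "i < j" for i
  proof -
    have "Suc j - 1 - i = Suc (j - 1 - i)"
      using that by simp
    then show ?thesis
      by (simp only: funpow_Suc_right comp_def)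
  qed
  ultimately show ?case
    by (simp add: Suc.IH funpow_Suc_right algebra_simps del: funpow.simps)
qed

lemma pair_count_0: "pair_count 0 = 2"
  by (simp add: pair_count_def)

lemma pair_count_rec:
  "pair_count j = catalan (Suc j) + catalan j + (\<Sum>i<j. (catalan (Suc i) + 2 * catalan i) * pair_count (j - 1 - i))"
proof -
  have "(tail_sum ^^ i) (\<lambda>s. s + 1) 2 = catalan (Suc i) + 2 * catalan i" for i
    using tail_sum_pow_shifted_id[of i 1] by simp
  moreover have "(tail_sum ^^ j) (\<lambda>s. s) 2 = catalan (Suc j) + catalan j"
    using tail_sum_pow_shifted_id[of j 0] by simp
  ultimately show ?thesis
    unfolding pair_count_def by (subst pair_step_pow_at_2) simp
qed

lemma pair_count_cong_catalan: "1 \<le> j \<Longrightarrow> [pair_count j = catalan j] (mod 2)"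
proof (induction j rule: less_induct)
  case (less j)
  then obtain k where j: "j = Suc k" by (cases j) auto
  have IH: "[(catalan (Suc i) + 2 * catalan i) * pair_count (k - i) = catalan (Suc i) * catalan (k - i)] (mod 2)"
    if "i < k" for i
  proof -
    have "[pair_count (k - i) = catalan (k - i)] (mod 2)"
      using that j by (intro less.IH) auto
    moreover have "[catalan (Suc i) + 2 * catalan i = catalan (Suc i)] (mod 2)"
      by (simp add: cong_def)
    ultimately show ?thesis by (rule cong_mult[rotated])
  qed
  let ?S = "\<Sum>i<k. (catalan (Suc i) + 2 * catalan i) * pair_count (k - i)"
  let ?T = "\<Sum>i<k. catalan (Suc i) * catalan (k - i)"
  have "pair_count j = catalan (Suc j) + catalan j + ?S + 2 * (catalan j + 2 * catalan k)"
    unfolding j by (subst pair_count_rec) (simp add: pair_count_0)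
  also have "[\<dots> = catalan (Suc j) + catalan j + ?S] (mod 2)"
    by (simp only: cong_def mod_mult_self2)
  also have "[catalan (Suc j) + catalan j + ?S = catalan (Suc j) + catalan j + ?T] (mod 2)"
    using IH by (intro cong_add cong_refl cong_sum) auto
  also have "catalan (Suc j) + catalan j + ?T = 2 * (catalan j + ?T) + catalan j"
    by (simp add: j catalan_Suc_Suc)
  also have "[2 * (catalan j + ?T) + catalan j = catalan j] (mod 2)"
    by (simp only: cong_def mod_mult_self4)
  finally show ?case .
qed

lemma odd_pair_count_iff: "odd (pair_count m) \<longleftrightarrow> 1 \<le> m \<and> (\<exists>t. m + 1 = 2 ^ t)"
proof (cases "m = 0")
  case True
  then show ?thesis
    by (simp add: pair_count_0)
next
  case False
  then have "odd (pair_count m) \<longleftrightarrow> odd (catalan m)"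
    using pair_count_cong_catalan[of m] by (simp add: cong_def odd_iff_mod_2_eq_one)
  then show ?thesis
    using False by (simp add: odd_catalan_iff)
qed

lemma double_add_2_eq_power_of_two_iff:
  "(\<exists>t > 1. 2 * m + 2 = 2 ^ t) \<longleftrightarrow> 1 \<le> m \<and> (\<exists>t. m + 1 = (2::nat) ^ t)"
proof
  assume "\<exists>t > 1. 2 * m + 2 = 2 ^ t"
  then obtain t where "t > 1" and eq: "2 * m + 2 = 2 ^ t"
    by blast
  then obtain u where "t = Suc u" and "u \<ge> 1"
    by (cases t) auto
  with eq have "m + 1 = 2 ^ u"
    by simp
  moreover have "(2::nat) ^ 1 \<le> 2 ^ u"
    using \<open>u \<ge> 1\<close> by (rule power_increasing) simp
  ultimately show "1 \<le> m \<and> (\<exists>t. m + 1 = (2::nat) ^ t)"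
    by auto
next
  assume "1 \<le> m \<and> (\<exists>t. m + 1 = (2::nat) ^ t)"
  then obtain t where "1 \<le> m" "m + 1 = (2::nat) ^ t"
    by blast
  moreover have "t \<noteq> 0"
  proof
    assume "t = 0"
    with \<open>m + 1 = 2 ^ t\<close> \<open>1 \<le> m\<close> show False
      by simp
  qed
  ultimately have "t \<noteq> 0" "2 * m + 2 = 2 ^ Suc t"
    by auto
  then show "\<exists>t > 1. 2 * m + 2 = 2 ^ t"
    by (intro exI[of _ "Suc t"]) simp
qed

theorem proposition11:
  fixes n :: nat
  assumes "n \<ge> 1"
  shows "odd (card (D_X n (A_n n))) \<longleftrightarrow> (n = 1 \<or> (\<exists>t::nat. t > 1 \<and> n = 2 ^ t))"
proof -
  have "\<exists>m. n = 1 \<or> n = 2 * m + 2 \<or> n = 2 * m + 3"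
    using assms by presburger
  then obtain m where "n = 1 \<or> n = 2 * m + 2 \<or> n = 2 * m + 3"
    by blast
  then consider "n = 1" | "n = 2 * m + 2" | "n = 2 * m + 3"
    by blast
  then show ?thesis
  proof cases
    case 1
    then show ?thesis
      using card_admissible_perms_1 by (simp add: card_D_X)
  next
    case 2
    then show ?thesis
      using double_add_2_eq_power_of_two_iff[of m] card_admissible_perms_even[of m]
      by (simp add: card_D_X odd_pair_count_iff)
  next
    case 3
    then have "odd n"
      by simp
    then have "\<not> (\<exists>t > 1. n = 2 ^ t)"
      by auto
    then show ?thesis
      using 3 even_card_admissible_perms_odd[of m] by (simp add: card_D_X)
  qed
qed

end
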